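(* Let $A$ be a non-negative $d\times d$ matrix and $M=(I-A^T)(I-A)$. Let $X$ be an entrywise strictly positive $d\times d$ matrix with $\rho(X)=1$. Let $\mathbf u,\mathbf v$ be its left and right leading eigenvectors, normalized by $\|\mathbf u\|=\|\mathbf v\|=1$. Suppose there is $r>0$ with $A=X+r\,\mathbf u\,\mathbf v^T$ (i.e. $X$ is a positive stationary point of problem (P)). Then $M\mathbf v=r^2\mathbf v$; thus $\mathbf v$ is an eigenvector of $M$, and $$X=A-(A-I)\mathbf v\,\mathbf v^T .$$
   Context: $\rho(\cdot)$ denotes spectral radius and $\|\cdot\|$ the Euclidean norm. Left and right leading eigenvectors satisfy $\mathbf u^TX=\mathbf u^T$ and $X\mathbf v=\mathbf v$; they are positive since $X>0$. Problem (P) is: minimize the Frobenius distance $\|X-A\|$ over non-negative $X$ with $\rho(X)\le1$. *)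

theory Defs
  imports "HOL-Analysis.Analysis"
begin

definition cmat :: "real^'n^'n \<Rightarrow> complex^'n^'n" where
  "cmat X = (\<chi> i j. complex_of_real (X $ i $ j))"

definition spectral_radius :: "real^'n^'n \<Rightarrow> real" where
  "spectral_radius X =
     Sup {cmod l | l. \<exists>w::complex^'n. w \<noteq> 0 \<and> cmat X *v w = l *s w}"

definition outer :: "real^'n \<Rightarrow> real^'n \<Rightarrow> real^'n^'n" where
  "outer u v = (\<chi> i j. u $ i * v $ j)"

end

theory Submission
  imports Defs
begin

text \<open>
  Since u and v are unit eigenvectors of X for the eigenvalue 1, the rank-one perturbation
  A = X + r u v^T acts on them by A v = v + r u and u^T A = u^T + r v^T.
  Hence (I - A) v = -r u and (I - A^T) u = -r v, so (I - A^T)(I - A) v = r^2 v;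
  and (A - I) v v^T = r u v^T = A - X.
\<close>

lemma outer_mult_vector: "outer u v *v w = (v \<bullet> w) *\<^sub>R u"
  by (simp add: outer_def matrix_vector_mult_def vec_eq_iff inner_vec_def
      sum_distrib_left mult_ac)

lemma vector_mult_outer: "w v* outer u v = (w \<bullet> u) *\<^sub>R v"
  by (simp add: outer_def vector_matrix_mult_def vec_eq_iff inner_vec_def
      sum_distrib_left mult_ac)

lemma matrix_mult_outer: "B ** outer v w = outer (B *v v) w"
  by (simp add: outer_def matrix_matrix_mult_def matrix_vector_mult_def vec_eq_iff
      sum_distrib_right mult.assoc)

lemma outer_scaleR_left: "outer (c *\<^sub>R u) v = c *\<^sub>R outer u v"
  by (simp add: outer_def vec_eq_iff)

lemma rank_one_update_right_eigenvector:
  fixes X :: "real^'n^'n"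
  assumes "X *v v = v" and "norm v = 1"
  shows "(X + r *\<^sub>R outer u v) *v v = v + r *\<^sub>R u"
  using assms
  by (simp add: matrix_vector_mult_add_rdistrib scaleR_matrix_vector_assoc[symmetric]
      outer_mult_vector dot_square_norm)

lemma rank_one_update_left_eigenvector:
  fixes X :: "real^'n^'n"
  assumes "u v* X = u" and "norm u = 1"
  shows "u v* (X + r *\<^sub>R outer u v) = u + r *\<^sub>R v"
  using assms
  by (simp add: vector_matrix_mult_add_rdistrib vector_scaleR_matrix_ac
      vector_mult_outer dot_square_norm)

lemma Gram_of_identity_minus_eigenvector:
  fixes A :: "real^'n^'n"
  assumes right: "A *v v = v + r *\<^sub>R u" and left: "u v* A = u + r *\<^sub>R v"
  shows "((mat 1 - transpose A) ** (mat 1 - A)) *v v = r\<^sup>2 *\<^sub>R v"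
proof -
  have "(mat 1 - A) *v v = (- r) *\<^sub>R u"
    using right by (simp add: matrix_vector_mult_diff_rdistrib)
  then have "((mat 1 - transpose A) ** (mat 1 - A)) *v v = (- r) *\<^sub>R (u - u v* A)"
    by (simp only: matrix_vector_mul_assoc[symmetric] matrix_vector_mult_diff_rdistrib
        matrix_vector_mul_lid transpose_matrix_vector scaleR_vector_matrix_assoc scaleR_diff_right)
  also have "\<dots> = r\<^sup>2 *\<^sub>R v"
    using left by (simp add: power2_eq_square)
  finally show ?thesis .
qed

theorem corollary2:
  fixes A X :: "real^'n^'n" and u v :: "real^'n" and r :: real
  assumes A_nonneg: "\<forall>i j. A $ i $ j \<ge> 0"
    and X_pos: "\<forall>i j. X $ i $ j > 0"
    and rho: "spectral_radius X = 1"
    and u_left: "u v* X = u" and u_pos: "\<forall>i. u $ i > 0" and u_norm: "norm u = 1"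
    and v_right: "X *v v = v" and v_pos: "\<forall>i. v $ i > 0" and v_norm: "norm v = 1"
    and r_pos: "r > 0"
    and A_eq: "A = X + r *\<^sub>R outer u v"
  shows "((mat 1 - transpose A) ** (mat 1 - A)) *v v = r\<^sup>2 *\<^sub>R v
         \<and> X = A - (A - mat 1) ** outer v v"
proof
  have Av: "A *v v = v + r *\<^sub>R u"
    unfolding A_eq using v_right v_norm by (rule rank_one_update_right_eigenvector)
  have uA: "u v* A = u + r *\<^sub>R v"
    unfolding A_eq using u_left u_norm by (rule rank_one_update_left_eigenvector)
  show "((mat 1 - transpose A) ** (mat 1 - A)) *v v = r\<^sup>2 *\<^sub>R v"
    using Av uA by (rule Gram_of_identity_minus_eigenvector)
  have "(A - mat 1) ** outer v v = r *\<^sub>R outer u v"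
    using Av by (simp add: matrix_mult_outer matrix_vector_mult_diff_rdistrib outer_scaleR_left)
  then show "X = A - (A - mat 1) ** outer v v"
    using A_eq by simp
qed

end
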